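(* Let $d\ge 2$ and $0<\delta<\frac{\pi}{2}$. A smooth convex body $D\subset S^d$ is of constant diameter $\delta$ if and only if it is of constant width $\delta$.
   Context: $S^d$ is the unit sphere in $E^{d+1}$; $|ab|$ denotes spherical distance (length of the shorter great-circle arc $ab$). A set containing no pair of antipodes is convex if it contains the arc joining any two of its points; a closed convex set with non-empty interior is a convex body. A hemisphere is the intersection of $S^d$ with a closed half-space of $E^{d+1}$ bounded by a hyperplane through the origin. A hemisphere $H$ supports a convex body $C$ at $p$ if $C\subset H$ and $p\in\mathrm{bd}(H)\cap C$; $p\in\mathrm{bd}(C)$ is a smooth point if exactly one hemisphere supports $C$ at $p$, and $C$ is smooth if all its boundary points are smooth. For different, non-opposite hemispheres $G,H$, the lune $G\cap H$ has thickness equal to the spherical distance between the centers of the $(d-1)$-dimensional hemispheres $\mathrm{bd}(G)\cap H$ and $\mathrm{bd}(H)\cap G$. For a hemisphere $K$ supporting $C$, $\mathrm{width}_K(C)$ is the thickness of a narrowest lune of the form $K\cap K^*$ containing $C$; $C$ is of constant width $w$ if $\mathrm{width}_K(C)=w$ for every supporting hemisphere $K$ of $C$. A convex body $D$ of diameter $\delta$ is of constant diameter $\delta$ if for every $p\in\mathrm{bd}(D)$ there is $p'\in\mathrm{bd}(D)$ with $|pp'|=\delta$. *)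

theory Defs
  imports "HOL-Analysis.Analysis"
begin

text \<open>The unit sphere S^d of E^{d+1}, realised in a Euclidean space 'a with DIM('a) = d+1.\<close>

abbreviation S :: "'a::euclidean_space set" where
  "S \<equiv> sphere 0 1"

definition sdist :: "'a::euclidean_space \<Rightarrow> 'a \<Rightarrow> real" where
  "sdist a b = arccos (a \<bullet> b)"

text \<open>The shorter great-circle arc joining two non-antipodal points of S.\<close>
definition sarc :: "'a::euclidean_space \<Rightarrow> 'a \<Rightarrow> 'a set" where
  "sarc a b = {(1 / norm ((1 - t) *\<^sub>R a + t *\<^sub>R b)) *\<^sub>R ((1 - t) *\<^sub>R a + t *\<^sub>R b) | t. t \<in> {0..1}}"

definition no_antipodes :: "'a::euclidean_space set \<Rightarrow> bool" where
  "no_antipodes C \<longleftrightarrow> (\<forall>x\<in>C. - x \<notin> C)"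

definition sconvex :: "'a::euclidean_space set \<Rightarrow> bool" where
  "sconvex C \<longleftrightarrow> C \<subseteq> S \<and> no_antipodes C \<and> (\<forall>a\<in>C. \<forall>b\<in>C. sarc a b \<subseteq> C)"

definition sinterior :: "'a::euclidean_space set \<Rightarrow> 'a set" where
  "sinterior C = (top_of_set S) interior_of C"

definition sbd :: "'a::euclidean_space set \<Rightarrow> 'a set" where
  "sbd C = (top_of_set S) frontier_of C"

definition convex_body :: "'a::euclidean_space set \<Rightarrow> bool" where
  "convex_body C \<longleftrightarrow> sconvex C \<and> closed C \<and> sinterior C \<noteq> {}"

definition hemi :: "'a::euclidean_space \<Rightarrow> 'a set" where
  "hemi m = {x \<in> S. m \<bullet> x \<ge> 0}"

definition hemisphere :: "'a::euclidean_space set \<Rightarrow> bool" where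
  "hemisphere H \<longleftrightarrow> (\<exists>m\<in>S. H = hemi m)"

definition hcenter :: "'a::euclidean_space set \<Rightarrow> 'a" where
  "hcenter H = (THE m. m \<in> S \<and> H = hemi m)"

definition supports_at :: "'a::euclidean_space set \<Rightarrow> 'a set \<Rightarrow> 'a \<Rightarrow> bool" where
  "supports_at H C p \<longleftrightarrow> hemisphere H \<and> C \<subseteq> H \<and> p \<in> sbd H \<inter> C"

definition supporting :: "'a::euclidean_space set \<Rightarrow> 'a set \<Rightarrow> bool" where
  "supporting H C \<longleftrightarrow> (\<exists>p. supports_at H C p)"

definition smooth_point :: "'a::euclidean_space set \<Rightarrow> 'a \<Rightarrow> bool" where
  "smooth_point C p \<longleftrightarrow> p \<in> sbd C \<and> (\<exists>!H. supports_at H C p)"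

definition smooth :: "'a::euclidean_space set \<Rightarrow> bool" where
  "smooth C \<longleftrightarrow> (\<forall>p\<in>sbd C. smooth_point C p)"

text \<open>For different non-opposite hemispheres G, H with centres g, h, the
  (d-1)-dimensional hemisphere bd(G) \<inter> H has centre equal to the normalised
  projection of h onto the hyperplane g-perp (and symmetrically).  The thickness
  of the lune G \<inter> H is the spherical distance between these two centres.\<close>
definition half_bd_center :: "'a::euclidean_space set \<Rightarrow> 'a set \<Rightarrow> 'a" where
  "half_bd_center G H =
     (let g = hcenter G; h = hcenter H; v = h - (h \<bullet> g) *\<^sub>R g in (1 / norm v) *\<^sub>R v)"

definition lune_pair :: "'a::euclidean_space set \<Rightarrow> 'a set \<Rightarrow> bool" where
  "lune_pair G H \<longleftrightarrow> hemisphere G \<and> hemisphere H \<and> G \<noteq> H \<and> hcenter G \<noteq> - hcenter H"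

definition thickness :: "'a::euclidean_space set \<Rightarrow> 'a set \<Rightarrow> real" where
  "thickness G H = sdist (half_bd_center G H) (half_bd_center H G)"

definition width_wrt :: "'a::euclidean_space set \<Rightarrow> 'a set \<Rightarrow> real" where
  "width_wrt K C = Inf {thickness K K' | K'. lune_pair K K' \<and> C \<subseteq> K \<inter> K'}"

definition constant_width :: "'a::euclidean_space set \<Rightarrow> real \<Rightarrow> bool" where
  "constant_width C w \<longleftrightarrow> (\<forall>K. supporting K C \<longrightarrow> width_wrt K C = w)"

definition sdiam :: "'a::euclidean_space set \<Rightarrow> real" where
  "sdiam D = Sup {sdist x y | x y. x \<in> D \<and> y \<in> D}"

definition constant_diameter :: "'a::euclidean_space set \<Rightarrow> real \<Rightarrow> bool" where
  "constant_diameter D \<delta> \<longleftrightarrow> convex_body D \<and> sdiam D = \<delta> \<and>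
     (\<forall>p\<in>sbd D. \<exists>p'\<in>sbd D. sdist p p' = \<delta>)"

end

theory Submission
  imports Defs
begin

text \<open>Call p, q \<in> C mutually farthest if each minimises the inner product with the other on C.
  Then the hemispheres tangent at p and at q to the arc pq both contain C, so the width of C with
  respect to the tangent hemisphere at p is at most |pq|; and every hemisphere containing p and q
  makes a lune of thickness at least |pq| with it once |pq| \<le> \<pi>/2, so that width is exactly |pq|.

  Constant diameter \<delta>: each boundary point p has a point at distance \<delta>, which is mutually
  farthest from p, and smoothness forces every supporting hemisphere at p to be the tangent one;
  hence every width is \<delta>.

  Constant width \<delta>: applied to a pair realising the diameter, this gives diam D = \<delta>.
  If all of D were within \<rho> < \<delta> of a boundary point p with supporting hemisphere centred
  at g, the hemisphere centred at sin \<rho> p - cos \<rho> g would contain D and make a lune of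
  thickness \<rho> with it, contradicting width \<delta>; so p has a point at distance \<delta>.\<close>

lemma sphere_inner_self: "x \<in> S \<Longrightarrow> x \<bullet> x = 1"
  by (simp add: norm_eq_1[symmetric])

lemma sphere_inner_bounds:
  assumes "x \<in> S" "y \<in> S"
  shows "x \<bullet> y \<le> 1" "-1 \<le> x \<bullet> y"
  using Cauchy_Schwarz_ineq2[of x y] assms by auto

lemma sphere_inner_eq_1_iff:
  assumes "x \<in> S" "y \<in> S"
  shows "x \<bullet> y = 1 \<longleftrightarrow> x = y"
proof
  assume "x \<bullet> y = 1"
  then have "(x - y) \<bullet> (x - y) = 0"
    using assms by (simp add: sphere_inner_self inner_diff_left inner_diff_right inner_commute)
  then show "x = y" by simp
qed (use assms sphere_inner_self in auto)

lemma sphere_inner_eq_neg1_iff: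
  assumes "x \<in> S" "y \<in> S"
  shows "x \<bullet> y = -1 \<longleftrightarrow> y = -x"
  using sphere_inner_eq_1_iff[of "-x" y] assms by auto

lemma sphere_inner_strict_bounds:
  assumes "x \<in> S" "y \<in> S" "y \<noteq> x" "y \<noteq> -x"
  shows "-1 < x \<bullet> y" "x \<bullet> y < 1"
  using sphere_inner_bounds[OF assms(1,2)] sphere_inner_eq_1_iff[OF assms(1,2)]
    sphere_inner_eq_neg1_iff[OF assms(1,2)] assms(3,4) by force+

lemma hemi_inj:
  assumes "u \<in> S" "v \<in> S" "hemi u = hemi v"
  shows "u = v"
proof (rule ccontr)
  assume "u \<noteq> v"
  then have uv: "u \<bullet> v < 1"
    using sphere_inner_bounds[OF assms(1,2)] sphere_inner_eq_1_iff[OF assms(1,2)] by force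
  define x where "x = sgn (u - v)"
  have xS: "x \<in> S" using \<open>u \<noteq> v\<close> by (simp add: x_def norm_sgn)
  have "u \<bullet> x = (1 - u \<bullet> v) / norm (u - v)" "v \<bullet> x = (u \<bullet> v - 1) / norm (u - v)"
    using assms(1,2) by (simp_all add: x_def sgn_div_norm inner_diff_right sphere_inner_self
        inner_commute divide_inverse)
  then have "x \<in> hemi u" "x \<notin> hemi v"
    using uv xS \<open>u \<noteq> v\<close> by (auto simp: hemi_def zero_le_divide_iff)
  with assms(3) show False by simp
qed

lemma hcenter_hemi: "u \<in> S \<Longrightarrow> hcenter (hemi u) = u"
  unfolding hcenter_def by (rule the_equality) (use hemi_inj in fastforce)+

lemma hemisphere_hemi: "u \<in> S \<Longrightarrow> hemisphere (hemi u)"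
  unfolding hemisphere_def by blast

lemma open_meets_below_great_sphere:
  assumes "x \<in> S" "g \<in> S" "g \<bullet> x = 0" "open U" "x \<in> U"
  shows "\<exists>y\<in>S \<inter> U. g \<bullet> y < 0"
proof -
  define f where "f e = sgn (x - e *\<^sub>R g)" for e :: real
  have "x \<noteq> 0" using assms(1) by auto
  then have "(f \<longlongrightarrow> f 0) (at_right 0)"
    unfolding f_def by (intro tendsto_intros) auto
  moreover have "f 0 = x" using assms(1) by (simp add: f_def sgn_div_norm)
  ultimately have "\<forall>\<^sub>F e in at_right 0. f e \<in> U"
    using assms(4,5) by (metis topological_tendstoD)
  then have "\<forall>\<^sub>F e in at_right 0. f e \<in> U \<and> 0 < e"
    using eventually_at_right_less by (rule eventually_conj)
  then obtain e :: real where e: "f e \<in> U" "0 < e"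
    using eventually_happens'[OF trivial_limit_at_right_real] by blast
  have ge: "g \<bullet> (x - e *\<^sub>R g) = - e"
    using assms(2,3) by (simp add: inner_diff_right sphere_inner_self)
  then have ne: "x - e *\<^sub>R g \<noteq> 0" using e by auto
  have "f e \<in> S" using ne by (simp add: f_def norm_sgn)
  moreover have "g \<bullet> f e < 0"
    using ge ne e by (simp add: f_def sgn_div_norm divide_inverse)
  ultimately show ?thesis using e by blast
qed

lemma not_in_sinterior_of_great_sphere:
  assumes "x \<in> S" "g \<in> S" "g \<bullet> x = 0" "A \<subseteq> hemi g"
  shows "x \<notin> sinterior A"
proof
  assume "x \<in> sinterior A"
  then obtain U where U: "open U" "x \<in> U" "S \<inter> U \<subseteq> A"
    unfolding sinterior_def interior_of_def openin_open by blast
  then obtain y where "y \<in> S \<inter> U" "g \<bullet> y < 0"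
    using open_meets_below_great_sphere[OF assms(1-3)] by blast
  with U(3) assms(4) have "y \<in> hemi g" by blast
  with \<open>g \<bullet> y < 0\<close> show False by (simp add: hemi_def)
qed

lemma sbd_if_on_supporting_great_sphere:
  assumes "C \<subseteq> hemi g" "g \<in> S" "x \<in> C" "g \<bullet> x = 0"
  shows "x \<in> sbd C"
proof -
  have "C \<subseteq> S" using assms(1) by (auto simp: hemi_def)
  then have "x \<in> (top_of_set S) closure_of C"
    using assms(3) closure_of_subset[of C "top_of_set S"] by auto
  moreover have "x \<notin> sinterior C"
    using \<open>C \<subseteq> S\<close> assms not_in_sinterior_of_great_sphere by blast
  ultimately show ?thesis by (simp add: sbd_def sinterior_def frontier_of_def)
qed

lemma sbd_hemi:
  assumes "g \<in> S"
  shows "x \<in> sbd (hemi g) \<longleftrightarrow> x \<in> S \<and> g \<bullet> x = 0"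
proof
  assume "x \<in> S \<and> g \<bullet> x = 0"
  then show "x \<in> sbd (hemi g)"
    using sbd_if_on_supporting_great_sphere[OF subset_refl assms] by (auto simp: hemi_def)
next
  assume x: "x \<in> sbd (hemi g)"
  have "hemi g = S \<inter> {x. g \<bullet> x \<ge> 0}" by (auto simp: hemi_def)
  then have "closedin (top_of_set S) (hemi g)"
    using closedin_closed_Int[OF closed_halfspace_ge] by metis
  then have "x \<in> hemi g"
    using x frontier_of_subset_closedin unfolding sbd_def by blast
  moreover have "\<not> g \<bullet> x > 0"
  proof
    assume "g \<bullet> x > 0"
    moreover have "openin (top_of_set S) (S \<inter> {y. g \<bullet> y > 0})"
      using open_halfspace_gt by blast
    moreover have "S \<inter> {y. g \<bullet> y > 0} \<subseteq> hemi g" by (auto simp: hemi_def)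
    ultimately have "x \<in> (top_of_set S) interior_of (hemi g)"
      using \<open>x \<in> hemi g\<close> unfolding interior_of_def hemi_def by blast
    with x show False by (simp add: sbd_def frontier_of_def)
  qed
  ultimately show "x \<in> S \<and> g \<bullet> x = 0" by (simp add: hemi_def)
qed

lemma supports_at_hemi_iff:
  assumes "g \<in> S"
  shows "supports_at (hemi g) C p \<longleftrightarrow> C \<subseteq> hemi g \<and> p \<in> C \<and> g \<bullet> p = 0"
  using assms hemisphere_hemi sbd_hemi by (auto simp: supports_at_def hemi_def)

lemma supports_atE:
  assumes "supports_at H C p"
  obtains g where "g \<in> S" "H = hemi g" "C \<subseteq> hemi g" "p \<in> C" "g \<bullet> p = 0"
  using assms supports_at_hemi_iff unfolding supports_at_def hemisphere_def by blast

lemma thickness_hemi: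
  assumes gS: "g \<in> S" and hS: "h \<in> S" and "h \<noteq> g" "h \<noteq> -g"
  shows "thickness (hemi g) (hemi h) = arccos (-(g \<bullet> h))"
proof -
  define t where "t = g \<bullet> h"
  have gh: "g \<bullet> h = t" and hg: "h \<bullet> g = t" by (simp_all add: t_def inner_commute)
  have gg: "g \<bullet> g = 1" and hh: "h \<bullet> h = 1" using sphere_inner_self gS hS by auto
  define v where "v = h - t *\<^sub>R g"
  define w where "w = g - t *\<^sub>R h"
  have vv: "v \<bullet> v = 1 - t\<^sup>2" and ww: "w \<bullet> w = 1 - t\<^sup>2" and vw: "v \<bullet> w = - t * (1 - t\<^sup>2)"
    unfolding v_def w_def inner_diff_left inner_diff_right inner_scaleR_left inner_scaleR_right gg hh gh hg
    by (simp_all add: power2_eq_square algebra_simps)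
  have "\<bar>t\<bar> < 1" using sphere_inner_strict_bounds[OF assms] unfolding t_def by auto
  then have pos: "1 - t\<^sup>2 > 0" by (simp add: abs_square_less_1)
  have "half_bd_center (hemi g) (hemi h) = (1 / norm v) *\<^sub>R v"
    and "half_bd_center (hemi h) (hemi g) = (1 / norm w) *\<^sub>R w"
    unfolding half_bd_center_def Let_def hcenter_hemi[OF gS] hcenter_hemi[OF hS] v_def w_def
    by (simp_all add: t_def inner_commute)
  moreover have "((1 / norm v) *\<^sub>R v) \<bullet> ((1 / norm w) *\<^sub>R w) = -t"
    using pos by (simp add: norm_eq_sqrt_inner vv ww vw)
  ultimately show ?thesis unfolding thickness_def sdist_def t_def by simp
qed

lemma lune_pair_hemi_iff:
  assumes "g \<in> S"
  shows "lune_pair (hemi g) K \<longleftrightarrow> (\<exists>h\<in>S. h \<noteq> g \<and> h \<noteq> -g \<and> K = hemi h)"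
proof
  assume lune: "lune_pair (hemi g) K"
  then obtain h where "h \<in> S" "K = hemi h"
    unfolding lune_pair_def hemisphere_def by blast
  with lune assms have "hemi g \<noteq> hemi h" "g \<noteq> - h"
    unfolding lune_pair_def by (auto simp: hcenter_hemi)
  with \<open>h \<in> S\<close> \<open>K = hemi h\<close> show "\<exists>h\<in>S. h \<noteq> g \<and> h \<noteq> -g \<and> K = hemi h" by auto
next
  assume "\<exists>h\<in>S. h \<noteq> g \<and> h \<noteq> -g \<and> K = hemi h"
  then show "lune_pair (hemi g) K"
    using assms hemi_inj hcenter_hemi hemisphere_hemi unfolding lune_pair_def by force
qed

lemma width_wrt_hemi:
  assumes "g \<in> S" "C \<subseteq> hemi g"
  shows "width_wrt (hemi g) C =
    Inf {arccos (-(g \<bullet> h)) | h. h \<in> S \<and> h \<noteq> g \<and> h \<noteq> -g \<and> C \<subseteq> hemi h}"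
proof -
  have "{thickness (hemi g) K | K. lune_pair (hemi g) K \<and> C \<subseteq> hemi g \<inter> K}
      = {thickness (hemi g) (hemi h) | h. h \<in> S \<and> h \<noteq> g \<and> h \<noteq> -g \<and> C \<subseteq> hemi h}"
  proof (intro set_eqI iffI)
    fix x assume "x \<in> {thickness (hemi g) (hemi h) | h. h \<in> S \<and> h \<noteq> g \<and> h \<noteq> -g \<and> C \<subseteq> hemi h}"
    then obtain h where "x = thickness (hemi g) (hemi h)" "h \<in> S" "h \<noteq> g" "h \<noteq> -g" "C \<subseteq> hemi h"
      by blast
    then show "x \<in> {thickness (hemi g) K | K. lune_pair (hemi g) K \<and> C \<subseteq> hemi g \<inter> K}"
      using assms lune_pair_hemi_iff[OF assms(1), of "hemi h"] by blast
  next
    fix x assume "x \<in> {thickness (hemi g) K | K. lune_pair (hemi g) K \<and> C \<subseteq> hemi g \<inter> K}"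
    then obtain K where "x = thickness (hemi g) K" "lune_pair (hemi g) K" "C \<subseteq> K" by blast
    then obtain h where "h \<in> S" "h \<noteq> g" "h \<noteq> -g" "K = hemi h"
      using lune_pair_hemi_iff[OF assms(1)] by blast
    with \<open>x = thickness (hemi g) K\<close> \<open>C \<subseteq> K\<close>
    show "x \<in> {thickness (hemi g) (hemi h) | h. h \<in> S \<and> h \<noteq> g \<and> h \<noteq> -g \<and> C \<subseteq> hemi h}"
      by blast
  qed
  also have "\<dots> = {arccos (-(g \<bullet> h)) | h. h \<in> S \<and> h \<noteq> g \<and> h \<noteq> -g \<and> C \<subseteq> hemi h}"
    using thickness_hemi[OF assms(1)] by (metis (no_types, lifting))
  finally show ?thesis unfolding width_wrt_def by simp
qed

lemma width_wrt_hemi_le: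
  assumes "g \<in> S" "C \<subseteq> hemi g" "h \<in> S" "h \<noteq> g" "h \<noteq> -g" "C \<subseteq> hemi h"
  shows "width_wrt (hemi g) C \<le> arccos (-(g \<bullet> h))"
  unfolding width_wrt_hemi[OF assms(1,2)]
proof (rule cInf_lower)
  show "bdd_below {arccos (-(g \<bullet> h)) | h. h \<in> S \<and> h \<noteq> g \<and> h \<noteq> -g \<and> C \<subseteq> hemi h}"
    using assms(1) sphere_inner_bounds
    by (intro bdd_belowI[of _ 0]) (auto intro!: arccos_lbound simp del: mem_sphere_0)
qed (use assms(3-6) in blast)

lemma width_wrt_hemi_ge:
  assumes "g \<in> S" "C \<subseteq> hemi g" "h \<in> S" "h \<noteq> g" "h \<noteq> -g" "C \<subseteq> hemi h"
    and "\<And>h'. h' \<in> S \<Longrightarrow> C \<subseteq> hemi h' \<Longrightarrow> -(g \<bullet> h') \<le> \<mu>" and "\<mu> \<le> 1"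
  shows "arccos \<mu> \<le> width_wrt (hemi g) C"
  unfolding width_wrt_hemi[OF assms(1,2)]
proof (rule cInf_greatest)
  fix x assume "x \<in> {arccos (-(g \<bullet> h)) | h. h \<in> S \<and> h \<noteq> g \<and> h \<noteq> -g \<and> C \<subseteq> hemi h}"
  then obtain h' where "x = arccos (-(g \<bullet> h'))" "h' \<in> S" "C \<subseteq> hemi h'" by blast
  then show "arccos \<mu> \<le> x"
    using assms(1,7,8) sphere_inner_bounds[of g h'] by (simp add: arccos_le_arccos)
qed (use assms(3-6) in blast)

definition arc_tangent :: "'a::euclidean_space \<Rightarrow> 'a \<Rightarrow> 'a" where
  "arc_tangent q p = sgn (p - (q \<bullet> p) *\<^sub>R q)"

lemma norm_tangent_component:
  assumes "p \<in> S" "q \<in> S"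
  shows "norm (p - (q \<bullet> p) *\<^sub>R q) = sqrt (1 - (q \<bullet> p)\<^sup>2)"
  using assms by (simp add: norm_eq_sqrt_inner inner_diff_left inner_diff_right sphere_inner_self
      inner_commute power2_eq_square)

lemma arc_tangent_geometry:
  assumes "p \<in> S" "q \<in> S" "-1 < q \<bullet> p" "q \<bullet> p < 1"
  shows "arc_tangent q p \<in> S" "arc_tangent q p \<bullet> q = 0"
    "arc_tangent q p \<bullet> arc_tangent p q = - (q \<bullet> p)"
proof -
  define m where "m = q \<bullet> p"
  have pos: "1 - m\<^sup>2 > 0" using assms(3,4) by (simp add: m_def abs_square_less_1 abs_less_iff)
  have pq: "p \<bullet> q = m" by (simp add: m_def inner_commute)
  have n1: "norm (p - m *\<^sub>R q) = sqrt (1 - m\<^sup>2)" and n2: "norm (q - m *\<^sub>R p) = sqrt (1 - m\<^sup>2)"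
    using norm_tangent_component[OF assms(1,2)] norm_tangent_component[OF assms(2,1)] pq
    by (simp_all add: m_def)
  then have ne: "p - m *\<^sub>R q \<noteq> 0" using pos by auto
  then show "arc_tangent q p \<in> S" by (simp add: arc_tangent_def m_def norm_sgn)
  have "(p - m *\<^sub>R q) \<bullet> q = 0"
    using assms(2) by (simp add: inner_diff_left sphere_inner_self pq)
  then show "arc_tangent q p \<bullet> q = 0"
    by (simp add: arc_tangent_def sgn_div_norm m_def[symmetric])
  have qp: "q \<bullet> p = m" and pp: "p \<bullet> p = 1" and qq: "q \<bullet> q = 1"
    using assms(1,2) sphere_inner_self by (auto simp: m_def)
  have "arc_tangent q p \<bullet> arc_tangent p q
      = ((p - m *\<^sub>R q) \<bullet> (q - m *\<^sub>R p)) / (1 - m\<^sup>2)"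
    using pos by (simp add: arc_tangent_def sgn_div_norm n1 n2 pq m_def[symmetric] divide_inverse
        flip: inverse_mult_distrib)
  also have "(p - m *\<^sub>R q) \<bullet> (q - m *\<^sub>R p) = - m * (1 - m\<^sup>2)"
    unfolding inner_diff_left inner_diff_right inner_scaleR_left inner_scaleR_right pp qq pq qp
    by (simp add: power2_eq_square algebra_simps)
  finally show "arc_tangent q p \<bullet> arc_tangent p q = - (q \<bullet> p)"
    using pos by (simp add: m_def)
qed

text \<open>If q minimises p \<bullet> _ on C, moving from q along an arc towards z \<in> C cannot decrease
  p \<bullet> _; the derivative at q of this function is the claimed inner product.\<close>
lemma minimiser_first_order:
  assumes "sconvex C" "q \<in> C" "z \<in> C" "\<forall>z\<in>C. p \<bullet> q \<le> p \<bullet> z"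
  shows "0 \<le> (p - (q \<bullet> p) *\<^sub>R q) \<bullet> z"
proof (rule ccontr)
  define m where "m = p \<bullet> q"
  define a where "a = q \<bullet> z"
  define b where "b = p \<bullet> z"
  have "(p - (q \<bullet> p) *\<^sub>R q) \<bullet> z = b - m * a"
    by (simp add: a_def b_def m_def inner_diff_left inner_commute[of q p])
  moreover assume "\<not> 0 \<le> (p - (q \<bullet> p) *\<^sub>R q) \<bullet> z"
  ultimately have neg: "b - m * a < 0" by simp
  have qS: "q \<in> S" and zS: "z \<in> S" and arcs: "sarc q z \<subseteq> C"
    using assms(1-3) by (auto simp: sconvex_def)
  define v where "v \<tau> = (1 - \<tau>) *\<^sub>R q + \<tau> *\<^sub>R z" for \<tau>
  define f where "f \<tau> = ((1-\<tau>)*m + \<tau>*b) / sqrt ((1-\<tau>)\<^sup>2 + 2*\<tau>*(1-\<tau>)*a + \<tau>\<^sup>2)" for \<tau>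
  have "p \<bullet> v \<tau> = (1-\<tau>)*m + \<tau>*b" for \<tau>
    by (simp add: v_def m_def b_def inner_add_right)
  moreover have "v \<tau> \<bullet> v \<tau> = (1-\<tau>)\<^sup>2 + 2*\<tau>*(1-\<tau>)*a + \<tau>\<^sup>2" for \<tau>
    unfolding v_def inner_add_left inner_add_right inner_scaleR_left inner_scaleR_right
      sphere_inner_self[OF qS] sphere_inner_self[OF zS] inner_commute[of z q]
    by (simp add: a_def power2_eq_square algebra_simps)
  ultimately have f_eq: "f \<tau> = p \<bullet> ((1 / norm (v \<tau>)) *\<^sub>R v \<tau>)" for \<tau>
    by (simp add: f_def norm_eq_sqrt_inner)
  have "(f has_real_derivative (b - m*a)) (at 0)"
    unfolding f_def by (rule derivative_eq_intros refl | simp)+ (simp add: algebra_simps)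
  then obtain d where d: "d > 0" "\<forall>h>0. h < d \<longrightarrow> f (0 + h) < f 0"
    using neg DERIV_neg_dec_right by blast
  define \<tau> where "\<tau> = min (d/2) 1"
  have \<tau>: "0 < \<tau>" "\<tau> < d" "\<tau> \<le> 1" using d by (auto simp: \<tau>_def)
  then have "(1 / norm (v \<tau>)) *\<^sub>R v \<tau> \<in> sarc q z" unfolding sarc_def v_def by auto
  with arcs have "(1 / norm (v \<tau>)) *\<^sub>R v \<tau> \<in> C" by blast
  then have "m \<le> f \<tau>" using assms(4) unfolding f_eq m_def by blast
  moreover have "f \<tau> < m" using d(2) \<tau>(1,2) by (simp add: f_def)
  ultimately show False by simp
qed

lemma sconvex_subset_hemi_arc_tangent:
  assumes "sconvex C" "q \<in> C" "\<forall>z\<in>C. p \<bullet> q \<le> p \<bullet> z"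
  shows "C \<subseteq> hemi (arc_tangent q p)"
proof
  fix z assume "z \<in> C"
  then have "0 \<le> (p - (q \<bullet> p) *\<^sub>R q) \<bullet> z" by (rule minimiser_first_order[OF assms(1,2) _ assms(3)])
  moreover have "z \<in> S" using assms(1) \<open>z \<in> C\<close> by (auto simp: sconvex_def)
  ultimately show "z \<in> hemi (arc_tangent q p)"
    by (simp add: hemi_def arc_tangent_def sgn_div_norm)
qed

lemma arc_tangent_inner_lower_bound:
  assumes "p \<in> S" "q \<in> S" "h \<in> S" "0 \<le> h \<bullet> p" "0 \<le> h \<bullet> q" "-1 < q \<bullet> p" "q \<bullet> p < 1"
  shows "- max (q \<bullet> p) 0 \<le> arc_tangent q p \<bullet> h"
proof -
  define m where "m = q \<bullet> p"
  define s where "s = sqrt (1 - m\<^sup>2)"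
  have "1 - m\<^sup>2 > 0" using assms(6,7) by (simp add: m_def abs_square_less_1 abs_less_iff)
  then have s: "s > 0" "s * s = 1 - m\<^sup>2" by (simp_all add: s_def)
  have pq: "p \<bullet> q = m" by (simp add: m_def inner_commute)
  have "- max m 0 * s \<le> (p - m *\<^sub>R q) \<bullet> h"
  proof (cases "m > 0")
    case False
    then show ?thesis using assms(4,5) mult_nonpos_nonneg[of m "h \<bullet> q"]
      by (simp add: inner_diff_right inner_commute[of _ h])
  next
    case True
    have "norm (q - m *\<^sub>R p) = s"
      using norm_tangent_component[OF assms(2,1)] by (simp add: pq s_def)
    then have cs: "(q - m *\<^sub>R p) \<bullet> h \<le> s"
      using norm_cauchy_schwarz[of "q - m *\<^sub>R p" h] assms(3) by simp
    have "p - m *\<^sub>R q = (1 - m\<^sup>2) *\<^sub>R p - m *\<^sub>R (q - m *\<^sub>R p)"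
      by (simp add: algebra_simps power2_eq_square)
    then have "(p - m *\<^sub>R q) \<bullet> h = (1 - m\<^sup>2) * (p \<bullet> h) - m * ((q - m *\<^sub>R p) \<bullet> h)"
      by (simp add: inner_diff_left)
    moreover have "0 \<le> (1 - m\<^sup>2) * (p \<bullet> h)"
      using assms(4) s by (simp add: inner_commute flip: s(2))
    moreover have "m * ((q - m *\<^sub>R p) \<bullet> h) \<le> m * s" using cs True by (simp add: mult_left_mono)
    ultimately have "- (m * s) \<le> (p - m *\<^sub>R q) \<bullet> h" by linarith
    with True show ?thesis by simp
  qed
  moreover have "arc_tangent q p \<bullet> h = ((p - m *\<^sub>R q) \<bullet> h) / s"
    using norm_tangent_component[OF assms(1,2)]
    by (simp add: arc_tangent_def sgn_div_norm m_def s_def divide_inverse mult.commute)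
  ultimately show ?thesis using s(1) by (simp add: m_def le_divide_eq)
qed

lemma sdist_le_iff_cos_le_inner:
  assumes "x \<in> S" "y \<in> S" "0 \<le> \<delta>" "\<delta> \<le> pi"
  shows "sdist x y \<le> \<delta> \<longleftrightarrow> cos \<delta> \<le> x \<bullet> y"
proof -
  have "-1 \<le> x \<bullet> y" "x \<bullet> y \<le> 1" using sphere_inner_bounds[OF assms(1,2)] by auto
  then show ?thesis
    using assms(3,4) cos_mono_le_eq[of \<delta> "arccos (x \<bullet> y)"] arccos_bounded[of "x \<bullet> y"]
    by (simp add: sdist_def)
qed

lemma sdist_eq_iff_inner_eq_cos:
  assumes "x \<in> S" "y \<in> S" "0 \<le> \<delta>" "\<delta> \<le> pi"
  shows "sdist x y = \<delta> \<longleftrightarrow> x \<bullet> y = cos \<delta>"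
  using sphere_inner_bounds[OF assms(1,2)] assms(3,4) arccos_cos cos_arccos
  unfolding sdist_def by metis

lemma sdist_le_sdiam:
  assumes "D \<subseteq> S" "x \<in> D" "y \<in> D"
  shows "sdist x y \<le> sdiam D"
  unfolding sdiam_def
proof (rule cSup_upper)
  show "bdd_above {sdist x y | x y. x \<in> D \<and> y \<in> D}"
    using assms(1)
    by (intro bdd_aboveI[of _ pi]) (auto simp: sdist_def intro!: arccos_ubound sphere_inner_bounds)
qed (use assms in blast)

lemma sdiam_eq_maximum:
  assumes "x \<in> D" "y \<in> D" "sdist x y = \<delta>" "\<And>x y. x \<in> D \<Longrightarrow> y \<in> D \<Longrightarrow> sdist x y \<le> \<delta>"
  shows "sdiam D = \<delta>"
  unfolding sdiam_def by (rule cSup_eq_maximum) (use assms in blast)+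

lemma sbd_subset:
  assumes "D \<subseteq> S" "closed D"
  shows "sbd D \<subseteq> D"
  unfolding sbd_def by (rule frontier_of_subset_closedin) (use assms closed_subset in blast)

lemma convex_body_compact: "convex_body D \<Longrightarrow> compact D"
  unfolding convex_body_def sconvex_def
  by (metis compact_Int_closed compact_sphere inf.absorb_iff2)

lemma convex_body_not_singleton:
  assumes "convex_body (D :: 'a::euclidean_space set)" "2 \<le> DIM('a)"
  obtains x y where "x \<in> D" "y \<in> D" "x \<noteq> y"
proof -
  obtain x where x: "x \<in> sinterior D"
    using assms(1) unfolding convex_body_def by blast
  have "D \<subseteq> S" using assms(1) by (simp add: convex_body_def sconvex_def)
  have "x \<in> D" "x \<in> S" using x \<open>D \<subseteq> S\<close> interior_of_subset[of "top_of_set S" D]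
    unfolding sinterior_def by auto
  show ?thesis
  proof (rule ccontr)
    assume "\<not> thesis"
    with that \<open>x \<in> D\<close> have "D = {x}" by blast
    then have "openin (top_of_set S) {x}"
      using x openin_interior_of interior_of_subset[of "top_of_set S" D]
      unfolding sinterior_def by (metis subset_singletonD empty_iff)
    moreover have "closedin (top_of_set S) {x}" using \<open>x \<in> S\<close> by (simp add: closed_subset)
    ultimately have "{x} = {} \<or> {x} = S"
      using connected_sphere[OF assms(2), of 0 1] unfolding connected_clopen by blast
    then have "{x} = S" by simp
    moreover have "-x \<in> S" using \<open>x \<in> S\<close> by simp
    moreover have "-x \<noteq> x"
      using sphere_inner_self[OF \<open>x \<in> S\<close>] by (metis inner_minus_right neg_equal_zero zero_neq_one)
    ultimately show False by blast
  qed
qed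

lemma width_wrt_hemi_arc_tangent_bounds:
  assumes "sconvex C" "p \<in> C" "q \<in> C" "-1 < p \<bullet> q" "p \<bullet> q < 1"
    and "\<forall>z\<in>C. p \<bullet> q \<le> p \<bullet> z" "\<forall>z\<in>C. q \<bullet> p \<le> q \<bullet> z"
  shows "C \<subseteq> hemi (arc_tangent p q)"
    and "arccos (max (p \<bullet> q) 0) \<le> width_wrt (hemi (arc_tangent p q)) C"
    and "width_wrt (hemi (arc_tangent p q)) C \<le> arccos (p \<bullet> q)"
proof -
  have CS: "C \<subseteq> S" using assms(1) by (simp add: sconvex_def)
  have pS: "p \<in> S" and qS: "q \<in> S" using CS assms(2,3) by auto
  have qp: "q \<bullet> p = p \<bullet> q" by (simp add: inner_commute)
  define g where "g = arc_tangent p q"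
  define h where "h = arc_tangent q p"
  have g: "g \<in> S" "C \<subseteq> hemi g" and h: "h \<in> S" "C \<subseteq> hemi h"
    using arc_tangent_geometry(1)[OF qS pS] arc_tangent_geometry(1)[OF pS qS] assms(4,5) qp
      sconvex_subset_hemi_arc_tangent[OF assms(1,2,7)] sconvex_subset_hemi_arc_tangent[OF assms(1,3,6)]
    by (simp_all add: g_def h_def)
  have gh: "g \<bullet> h = - (p \<bullet> q)"
    using arc_tangent_geometry(3)[OF qS pS] assms(4,5) by (simp add: g_def h_def)
  have ne: "h \<noteq> g" "h \<noteq> -g"
    using gh sphere_inner_self[OF g(1)] assms(4,5) by auto
  show "width_wrt (hemi g) C \<le> arccos (p \<bullet> q)"
    using width_wrt_hemi_le[OF g h(1) ne h(2)] gh by simp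
  have "- (g \<bullet> h') \<le> max (p \<bullet> q) 0" if "h' \<in> S" "C \<subseteq> hemi h'" for h'
  proof -
    have "0 \<le> h' \<bullet> q" "0 \<le> h' \<bullet> p" using that(2) assms(2,3) by (auto simp: hemi_def)
    then show ?thesis
      using arc_tangent_inner_lower_bound[OF qS pS \<open>h' \<in> S\<close>] assms(4,5) by (simp add: g_def qp)
  qed
  then show "arccos (max (p \<bullet> q) 0) \<le> width_wrt (hemi g) C"
    using width_wrt_hemi_ge[OF g h(1) ne h(2)] assms(5) by simp
  show "C \<subseteq> hemi g" by (fact g(2))
qed

text \<open>If C lies within distance \<rho> of a point p on the boundary of a supporting hemisphere
  hemi g, then C also lies in the hemisphere with centre sin \<rho> p - cos \<rho> g, whose lune
  with hemi g has thickness \<rho>.\<close>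
lemma width_wrt_hemi_le_radius:
  assumes "C \<subseteq> S" "g \<in> S" "C \<subseteq> hemi g" "p \<in> S" "g \<bullet> p = 0" "0 < \<rho>" "\<rho> < pi/2"
    and "\<forall>z\<in>C. cos \<rho> \<le> p \<bullet> z"
  shows "width_wrt (hemi g) C \<le> \<rho>"
proof -
  have cos: "0 < cos \<rho>" "cos \<rho> < 1" and sin: "0 < sin \<rho>"
    using assms(6,7) cos_monotone_0_pi[of 0 \<rho>] by (auto intro!: cos_gt_zero_pi sin_gt_zero)
  have pp: "p \<bullet> p = 1" and gg: "g \<bullet> g = 1" and pg: "p \<bullet> g = 0"
    using sphere_inner_self assms(2,4,5) by (auto simp: inner_commute)
  define h where "h = sin \<rho> *\<^sub>R p - cos \<rho> *\<^sub>R g"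
  have "h \<bullet> h = (sin \<rho>)\<^sup>2 + (cos \<rho>)\<^sup>2"
    unfolding h_def inner_diff_left inner_diff_right inner_scaleR_left inner_scaleR_right pp gg pg assms(5)
    by (simp add: power2_eq_square)
  then have hS: "h \<in> S" by (simp add: norm_eq_1)
  have gh: "g \<bullet> h = - cos \<rho>"
    unfolding h_def inner_diff_right inner_scaleR_right assms(5) gg by simp
  have "C \<subseteq> hemi h"
  proof
    fix z assume "z \<in> C"
    define \<alpha> where "\<alpha> = p \<bullet> z"
    define \<beta> where "\<beta> = g \<bullet> z"
    have zS: "z \<in> S" using \<open>z \<in> C\<close> assms(1) by blast
    have \<alpha>: "cos \<rho> \<le> \<alpha>" and \<beta>: "0 \<le> \<beta>"
      using assms(3,8) \<open>z \<in> C\<close> by (auto simp: \<alpha>_def \<beta>_def hemi_def)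
    have zp: "z \<bullet> p = \<alpha>" and zg: "z \<bullet> g = \<beta>" by (simp_all add: \<alpha>_def \<beta>_def inner_commute)
    have "0 \<le> (z - \<alpha> *\<^sub>R p - \<beta> *\<^sub>R g) \<bullet> (z - \<alpha> *\<^sub>R p - \<beta> *\<^sub>R g)" by simp
    also have "\<dots> = 1 - \<alpha>\<^sup>2 - \<beta>\<^sup>2"
      unfolding inner_diff_left inner_diff_right inner_scaleR_left inner_scaleR_right pp gg pg assms(5)
        sphere_inner_self[OF zS] zp zg \<alpha>_def[symmetric] \<beta>_def[symmetric]
      by (simp add: power2_eq_square algebra_simps)
    finally have "\<beta>\<^sup>2 \<le> (sin \<rho>)\<^sup>2"
      using power_mono[OF \<alpha> less_imp_le[OF cos(1)], of 2] by (simp add: sin_squared_eq)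
    then have "\<beta> \<le> sin \<rho>" using \<beta> sin by (simp add: abs_le_square_iff)
    then have "cos \<rho> * \<beta> \<le> sin \<rho> * \<alpha>"
      using \<alpha> \<beta> cos sin mult_mono[of "cos \<rho>" "\<alpha>" "\<beta>" "sin \<rho>"] by (simp add: mult.commute)
    then show "z \<in> hemi h"
      using zS by (simp add: hemi_def h_def inner_diff_left \<alpha>_def \<beta>_def)
  qed
  moreover have "h \<noteq> g" "h \<noteq> -g" using gh gg cos by auto
  ultimately have "width_wrt (hemi g) C \<le> arccos (cos \<rho>)"
    using width_wrt_hemi_le[OF assms(2,3) hS] gh by simp
  then show ?thesis using assms(6,7) by (simp add: arccos_cos)
qed

lemma farthest_point_in_sbd:
  assumes "sconvex D" "p \<in> S" "q \<in> D" "\<forall>z\<in>D. p \<bullet> q \<le> p \<bullet> z" "-1 < p \<bullet> q" "p \<bullet> q < 1"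
  shows "q \<in> sbd D"
proof -
  have "q \<in> S" using assms(1,3) by (auto simp: sconvex_def)
  then show ?thesis
    using sconvex_subset_hemi_arc_tangent[OF assms(1,3,4)] arc_tangent_geometry[OF assms(2) \<open>q \<in> S\<close>]
      assms(3,5,6) sbd_if_on_supporting_great_sphere
    by (metis inner_commute)
qed

lemma constant_width_farthest_point:
  assumes "sconvex D" "compact D" "0 < \<delta>" "\<delta> < pi/2" "\<forall>x\<in>D. \<forall>y\<in>D. cos \<delta> \<le> x \<bullet> y"
    and "g \<in> S" "D \<subseteq> hemi g" "p \<in> D" "g \<bullet> p = 0" "width_wrt (hemi g) D = \<delta>"
  shows "\<exists>p'\<in>sbd D. sdist p p' = \<delta>"
proof -
  have DS: "D \<subseteq> S" using assms(1) by (simp add: sconvex_def)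
  have pS: "p \<in> S" using DS assms(8) by blast
  have "continuous_on D (\<lambda>z. p \<bullet> z)" by (intro continuous_intros)
  then obtain p' where p': "p' \<in> D" "\<forall>z\<in>D. p \<bullet> p' \<le> p \<bullet> z"
    using continuous_attains_inf[OF assms(2)] assms(8) by blast
  have cos: "0 < cos \<delta>" "cos \<delta> < 1"
    using assms(3,4) cos_monotone_0_pi[of 0 \<delta>] by (auto intro!: cos_gt_zero_pi)
  have "p \<bullet> p' = cos \<delta>"
  proof (rule ccontr)
    define m where "m = p \<bullet> p'"
    have "m \<le> 1" using sphere_inner_bounds[OF pS] DS p'(1) by (auto simp: m_def)
    assume "p \<bullet> p' \<noteq> cos \<delta>"
    then have "cos \<delta> < m" using assms(5,8) p'(1) by (force simp: m_def)
    then have "arccos m < \<delta>" "0 \<le> arccos m"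
      using arccos_less_arccos[of "cos \<delta>" m] cos \<open>m \<le> 1\<close> assms(3,4)
      by (auto simp: arccos_cos intro!: arccos_lbound)
    define \<rho> where "\<rho> = (arccos m + \<delta>) / 2"
    have \<rho>: "0 < \<rho>" "\<rho> < \<delta>" "arccos m \<le> \<rho>"
      using \<open>arccos m < \<delta>\<close> \<open>0 \<le> arccos m\<close> by (auto simp: \<rho>_def)
    have "cos \<rho> \<le> cos (arccos m)"
      using \<rho> \<open>0 \<le> arccos m\<close> assms(4) by (intro cos_monotone_0_pi_le) auto
    then have "\<forall>z\<in>D. cos \<rho> \<le> p \<bullet> z"
      using p'(2) \<open>cos \<delta> < m\<close> \<open>m \<le> 1\<close> cos by (force simp: m_def)
    then have "width_wrt (hemi g) D \<le> \<rho>"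
      using width_wrt_hemi_le_radius[OF DS assms(6,7) pS assms(9)] \<rho> assms(4) by simp
    with \<rho> assms(10) show False by simp
  qed
  then have "p' \<in> sbd D"
    using farthest_point_in_sbd[OF assms(1) pS p'] cos by simp
  moreover have "sdist p p' = \<delta>"
    using sdist_eq_iff_inner_eq_cos[OF pS _, of p' \<delta>] DS p'(1) \<open>p \<bullet> p' = cos \<delta>\<close> assms(3,4) by auto
  ultimately show ?thesis by blast
qed

lemma constant_width_inner_minimum:
  fixes D :: "'a::euclidean_space set"
  assumes "convex_body D" "2 \<le> DIM('a)" "0 < \<delta>" "\<delta> < pi/2" "constant_width D \<delta>"
  obtains x y where "x \<in> D" "y \<in> D" "x \<bullet> y = cos \<delta>" "\<forall>x\<in>D. \<forall>y\<in>D. cos \<delta> \<le> x \<bullet> y"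
proof -
  have cv: "sconvex D" and DS: "D \<subseteq> S" and na: "no_antipodes D"
    using assms(1) by (auto simp: convex_body_def sconvex_def)
  obtain x1 y1 where "x1 \<in> D" "y1 \<in> D" "x1 \<noteq> y1"
    using convex_body_not_singleton[OF assms(1,2)] by blast
  have "compact (D \<times> D)"
    using convex_body_compact[OF assms(1)] by (intro compact_Times)
  moreover have "D \<times> D \<noteq> {}" using \<open>x1 \<in> D\<close> by blast
  moreover have "continuous_on (D \<times> D) (\<lambda>z. fst z \<bullet> snd z)" by (intro continuous_intros)
  ultimately obtain z where "z \<in> D \<times> D" "\<forall>z'\<in>D \<times> D. fst z \<bullet> snd z \<le> fst z' \<bullet> snd z'"
    by (rule continuous_attains_inf[THEN bexE])
  then obtain x y where xy: "x \<in> D" "y \<in> D" and min: "\<forall>x'\<in>D. \<forall>y'\<in>D. x \<bullet> y \<le> x' \<bullet> y'"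
    by (metis mem_Times_iff fst_conv snd_conv)
  have xS: "x \<in> S" and yS: "y \<in> S" using xy DS by auto
  have "x \<bullet> y \<le> x1 \<bullet> y1" using min \<open>x1 \<in> D\<close> \<open>y1 \<in> D\<close> by blast
  also have "\<dots> < 1"
  proof -
    have "x1 \<in> S" "y1 \<in> S" using DS \<open>x1 \<in> D\<close> \<open>y1 \<in> D\<close> by auto
    then show ?thesis
      using sphere_inner_bounds(1) sphere_inner_eq_1_iff \<open>x1 \<noteq> y1\<close> by (metis less_le)
  qed
  finally have t1: "x \<bullet> y < 1" .
  have t0: "-1 < x \<bullet> y"
    using sphere_inner_bounds[OF xS yS] sphere_inner_eq_neg1_iff[OF xS yS] na xy
    by (force simp: no_antipodes_def)
  have "\<forall>z\<in>D. x \<bullet> y \<le> x \<bullet> z" "\<forall>z\<in>D. y \<bullet> x \<le> y \<bullet> z"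
    using min xy by (auto simp: inner_commute)
  note bounds = width_wrt_hemi_arc_tangent_bounds[OF cv xy t0 t1 this]
  have "supports_at (hemi (arc_tangent x y)) D x"
    using arc_tangent_geometry[OF yS xS] bounds(1) xy t0 t1
    by (subst supports_at_hemi_iff) (simp_all add: inner_commute)
  then have w: "width_wrt (hemi (arc_tangent x y)) D = \<delta>"
    using assms(5) by (auto simp: constant_width_def supporting_def)
  have "0 < x \<bullet> y"
  proof (rule ccontr)
    assume "\<not> 0 < x \<bullet> y"
    then have "max (x \<bullet> y) 0 = 0" by simp
    with bounds(2) w have "pi/2 \<le> \<delta>" by (metis arccos_0)
    with assms(4) show False by linarith
  qed
  with bounds(2,3) w have "arccos (x \<bullet> y) = \<delta>" by simp
  moreover have "cos (arccos (x \<bullet> y)) = x \<bullet> y" using t0 t1 by simp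
  ultimately have "x \<bullet> y = cos \<delta>" by simp
  with that xy min show ?thesis by simp
qed

lemma constant_diameter_imp_constant_width:
  assumes "smooth D" "0 < \<delta>" "\<delta> < pi/2" "constant_diameter D \<delta>"
  shows "constant_width D \<delta>"
  unfolding constant_width_def
proof (intro allI impI)
  fix K assume "supporting K D"
  then obtain p g where K: "supports_at K D p" and g: "g \<in> S" "K = hemi g" "D \<subseteq> hemi g" "p \<in> D" "g \<bullet> p = 0"
    unfolding supporting_def by (metis supports_atE)
  have cb: "convex_body D" and diam: "sdiam D = \<delta>" and far: "\<forall>p\<in>sbd D. \<exists>p'\<in>sbd D. sdist p p' = \<delta>"
    using assms(4) by (auto simp: constant_diameter_def)
  then have cv: "sconvex D" and DS: "D \<subseteq> S" and "closed D" by (auto simp: convex_body_def sconvex_def)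
  have \<delta>: "0 \<le> \<delta>" "\<delta> \<le> pi" and cos: "0 < cos \<delta>" "cos \<delta> < 1"
    using assms(2,3) cos_monotone_0_pi[of 0 \<delta>] by (auto intro!: cos_gt_zero_pi)
  have near: "cos \<delta> \<le> x \<bullet> y" if "x \<in> D" "y \<in> D" for x y
    using sdist_le_sdiam[OF DS that] diam sdist_le_iff_cos_le_inner[OF _ _ \<delta>] DS that by blast
  have "p \<in> sbd D" using sbd_if_on_supporting_great_sphere g(1,3-5) by blast
  then obtain p' where "p' \<in> sbd D" "sdist p p' = \<delta>" using far by blast
  then have p': "p' \<in> D" using sbd_subset[OF DS \<open>closed D\<close>] by blast
  have pS: "p \<in> S" and p'S: "p' \<in> S" using DS g(4) p' by auto
  have pp': "p \<bullet> p' = cos \<delta>" "p' \<bullet> p = cos \<delta>"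
    using sdist_eq_iff_inner_eq_cos[OF pS p'S \<delta>] \<open>sdist p p' = \<delta>\<close> by (simp_all add: inner_commute)
  have "\<forall>z\<in>D. p \<bullet> p' \<le> p \<bullet> z" "\<forall>z\<in>D. p' \<bullet> p \<le> p' \<bullet> z"
    using near g(4) p' pp' by auto
  note bounds = width_wrt_hemi_arc_tangent_bounds[OF cv g(4) p' _ _ this]
  have "supports_at (hemi (arc_tangent p p')) D p"
    using arc_tangent_geometry[OF p'S pS] bounds(1) g(4) pp' cos
    by (subst supports_at_hemi_iff) (simp_all add: inner_commute)
  with K \<open>p \<in> sbd D\<close> assms(1) have "K = hemi (arc_tangent p p')"
    unfolding smooth_def smooth_point_def by blast
  with bounds(2,3) pp' cos show "width_wrt K D = \<delta>"
    using \<delta> by (simp add: arccos_cos)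
qed

lemma constant_width_imp_constant_diameter:
  fixes D :: "'a::euclidean_space set"
  assumes "convex_body D" "2 \<le> DIM('a)" "smooth D" "0 < \<delta>" "\<delta> < pi/2" "constant_width D \<delta>"
  shows "constant_diameter D \<delta>"
proof -
  have cv: "sconvex D" and DS: "D \<subseteq> S" using assms(1) by (auto simp: convex_body_def sconvex_def)
  have \<delta>: "0 \<le> \<delta>" "\<delta> \<le> pi" using assms(4,5) by auto
  obtain x y where xy: "x \<in> D" "y \<in> D" "x \<bullet> y = cos \<delta>" and near: "\<forall>x\<in>D. \<forall>y\<in>D. cos \<delta> \<le> x \<bullet> y"
    using constant_width_inner_minimum[OF assms(1,2,4-6)] by blast
  have "sdiam D = \<delta>"
  proof (rule sdiam_eq_maximum)
    show "sdist x y = \<delta>" using sdist_eq_iff_inner_eq_cos[OF _ _ \<delta>] DS xy by blast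
    show "sdist x' y' \<le> \<delta>" if "x' \<in> D" "y' \<in> D" for x' y'
      using sdist_le_iff_cos_le_inner[OF _ _ \<delta>] DS that near by blast
  qed (use xy in blast)+
  moreover have "\<exists>p'\<in>sbd D. sdist p p' = \<delta>" if p: "p \<in> sbd D" for p
  proof -
    obtain H where "supports_at H D p" using assms(3) p by (auto simp: smooth_def smooth_point_def)
    then obtain g where g: "g \<in> S" "H = hemi g" "D \<subseteq> hemi g" "p \<in> D" "g \<bullet> p = 0"
      by (rule supports_atE)
    moreover have "width_wrt H D = \<delta>"
      using assms(6) \<open>supports_at H D p\<close> by (auto simp: constant_width_def supporting_def)
    ultimately show ?thesis
      using constant_width_farthest_point[OF cv convex_body_compact[OF assms(1)] assms(4,5) near] by simp
  qed
  ultimately show ?thesis using assms(1) by (simp add: constant_diameter_def)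
qed

theorem theorem1:
  fixes D :: "'a::euclidean_space set" and d :: nat and \<delta> :: real
  assumes "DIM('a) = d + 1" and "d \<ge> 2"
    and "0 < \<delta>" and "\<delta> < pi / 2"
    and "convex_body D" and "smooth D"
  shows "constant_diameter D \<delta> \<longleftrightarrow> constant_width D \<delta>"
  using constant_diameter_imp_constant_width[OF assms(6,3,4)]
    constant_width_imp_constant_diameter[OF assms(5) _ assms(6,3,4)] assms(1,2)
  by auto

end
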